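(* Let $(X,d_X)$ be a compact metric space, let $0<\gamma<1$, let $(\phi_j)_{j\in\mathbb{N}}$ be maps $\phi_j:X\to X$ with $d_X(\phi_j(x_1),\phi_j(x_2))\le \gamma\, d_X(x_1,x_2)$ for all $j$ and $x_1,x_2\in X$, and let $(q_j)_{j\in\mathbb{N}}$ be real numbers with $q_j\le 0$ and $\sup_j q_j=0$. Let $\nu\in I(X)$ be the unique idempotent probability with $M_{\phi,q}(\nu)=\nu$, where $M_{\phi,q}(\mu)(f):=\sup_{j\in\mathbb{N}}(q_j+\mu(f\circ\phi_j))$. For each $n\in\mathbb{N}$ let $\alpha_n:=\max_{1\le j\le n} q_j$, $\tilde q_j:=q_j-\alpha_n$ for $1\le j\le n$, $M_{\phi,\tilde q,n}(\mu)(f):=\max_{1\le j\le n}(\tilde q_j+\mu(f\circ\phi_j))$, and let $\mu_n\in I(X)$ be the unique idempotent probability with $M_{\phi,\tilde q,n}(\mu_n)=\mu_n$. Let $(\mu_{n_i})_{i\in\mathbb{N}}$ be any subsequence that converges in the topology $\tau_p$. Then $\mu_{n_i}\to\nu$ in $\tau_p$; in particular the sequence $(\mu_n)$ converges in the $\tau_p$ topology (to $\nu$).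
   Context: $C(X,\mathbb{R})$ is the set of continuous real functions on $X$. $I(X)$ is the set of functionals $m:C(X,\mathbb{R})\to\mathbb{R}$ with $m(a+f)=a+m(f)$ for $a\in\mathbb{R}$, $m(\max(f,g))=\max(m(f),m(g))$, and $m(0)=0$. The topology $\tau_p$ on $I(X)$ is that of pointwise convergence: $\mu_k\to\mu$ iff $\mu_k(f)\to\mu(f)$ for every $f\in C(X,\mathbb{R})$. The existence and uniqueness of $\nu$ and of each $\mu_n$ (fixed points of the respective contractive operators) are part of the setting. *)

theory Defs
  imports "HOL-Analysis.Analysis"
begin

text \<open>The compact metric space X is the whole of a type 'a with compact UNIV;
  C(X,R) is the bcontfun type over real.\<close>

definition maxC :: "('a::topological_space \<Rightarrow>\<^sub>C real) \<Rightarrow> ('a \<Rightarrow>\<^sub>C real) \<Rightarrow> ('a \<Rightarrow>\<^sub>C real)" where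
  "maxC f g = Bcontfun (\<lambda>x. max (apply_bcontfun f x) (apply_bcontfun g x))"

definition compC :: "('a::topological_space \<Rightarrow>\<^sub>C real) \<Rightarrow> ('a \<Rightarrow> 'a) \<Rightarrow> ('a \<Rightarrow>\<^sub>C real)" where
  "compC f \<phi> = Bcontfun (apply_bcontfun f \<circ> \<phi>)"

definition idem_prob :: "(('a::topological_space \<Rightarrow>\<^sub>C real) \<Rightarrow> real) \<Rightarrow> bool" where
  "idem_prob m \<longleftrightarrow>
     (\<forall>a f. m (const_bcontfun a + f) = a + m f) \<and>
     (\<forall>f g. m (maxC f g) = max (m f) (m g)) \<and>
     m 0 = 0"

definition M_inf :: "(nat \<Rightarrow> real) \<Rightarrow> (nat \<Rightarrow> 'a \<Rightarrow> 'a)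
     \<Rightarrow> (('a::topological_space \<Rightarrow>\<^sub>C real) \<Rightarrow> real) \<Rightarrow> (('a \<Rightarrow>\<^sub>C real) \<Rightarrow> real)" where
  "M_inf q \<phi> \<mu> = (\<lambda>f. SUP j\<in>{1..}. q j + \<mu> (compC f (\<phi> j)))"

definition alpha :: "(nat \<Rightarrow> real) \<Rightarrow> nat \<Rightarrow> real" where
  "alpha q n = (MAX j\<in>{1..n}. q j)"

definition M_fin :: "(nat \<Rightarrow> real) \<Rightarrow> (nat \<Rightarrow> 'a \<Rightarrow> 'a) \<Rightarrow> nat
     \<Rightarrow> (('a::topological_space \<Rightarrow>\<^sub>C real) \<Rightarrow> real) \<Rightarrow> (('a \<Rightarrow>\<^sub>C real) \<Rightarrow> real)" where
  "M_fin q \<phi> n \<mu> = (\<lambda>f. MAX j\<in>{1..n}. (q j - alpha q n) + \<mu> (compC f (\<phi> j)))"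

end

theory Submission
  imports Defs
begin

(* The finite operators M_{phi,q~,n} contract uniformly in n: after k iterations, the values at f
   of any two idempotent probabilities differ by at most twice the oscillation of f at scale
   gamma^k diam X.  Hence mu_n f is uniformly close to the k-th iterate of M_{phi,q~,n} applied to
   nu.  That iterate is the k-th iterate of the unnormalised maximum over phi_1, ..., phi_n applied
   to nu, shifted by -k alpha_n; as n grows the former increases to nu f, because nu is fixed by
   the supremum over all phi_j, while alpha_n tends to 0. *)

lemma idem_prob_const:
  assumes "idem_prob m"
  shows "m (const_bcontfun c) = c"
  using assms unfolding idem_prob_def by (metis add.right_neutral)

lemma idem_prob_mono:
  fixes f g :: "'a::topological_space \<Rightarrow>\<^sub>C real"
  assumes "idem_prob m" and "\<And>x. f x \<le> g x"
  shows "m f \<le> m g"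
proof -
  have "maxC f g = g"
    unfolding maxC_def using assms(2) by (simp add: max_absorb2 apply_bcontfun_inverse)
  then show ?thesis
    using assms(1) unfolding idem_prob_def by (metis max.cobounded1)
qed

lemma idem_prob_abs_diff_le:
  fixes g :: "'a::topological_space \<Rightarrow>\<^sub>C real"
  assumes "idem_prob m" and "\<And>x. \<bar>g x - c\<bar> \<le> e"
  shows "\<bar>m g - c\<bar> \<le> e"
proof -
  have "c - e \<le> g x" "g x \<le> c + e" for x
    using assms(2)[of x] by linarith+
  then have "m (const_bcontfun (c - e)) \<le> m g" "m g \<le> m (const_bcontfun (c + e))"
    using assms(1) by (simp_all add: idem_prob_mono)
  then show ?thesis
    using idem_prob_const[OF assms(1)] by (simp add: abs_le_iff)
qed

lemma apply_compC:
  fixes f :: "'a::topological_space \<Rightarrow>\<^sub>C real"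
  assumes "continuous_on UNIV \<psi>"
  shows "compC f \<psi> x = f (\<psi> x)"
proof -
  have "range (f \<circ> \<psi>) \<subseteq> range f"
    by auto
  then have "bounded (range (f \<circ> \<psi>))"
    by (rule bounded_subset[OF bounded_apply_bcontfun])
  moreover have "continuous_on UNIV (f \<circ> \<psi>)"
    by (rule continuous_on_compose[OF assms continuous_on_apply_bcontfun])
  ultimately have "f \<circ> \<psi> \<in> bcontfun"
    unfolding bcontfun_def by simp
  then show ?thesis
    unfolding compC_def by (simp add: Bcontfun_inverse)
qed

lemma abs_Max_diff_le:
  fixes a b :: "'a \<Rightarrow> real"
  assumes "finite A" "A \<noteq> {}" "\<And>j. j \<in> A \<Longrightarrow> \<bar>a j - b j\<bar> \<le> e"
  shows "\<bar>(MAX j\<in>A. a j) - (MAX j\<in>A. b j)\<bar> \<le> e"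
proof -
  have "(MAX j\<in>A. a j) \<in> a ` A" "(MAX j\<in>A. b j) \<in> b ` A"
    using assms(1,2) by simp_all
  then obtain i k where i: "i \<in> A" "(MAX j\<in>A. a j) = a i"
    and k: "k \<in> A" "(MAX j\<in>A. b j) = b k"
    by (metis imageE)
  have "b i \<le> (MAX j\<in>A. b j)" "a k \<le> (MAX j\<in>A. a j)"
    using i(1) k(1) assms(1) by auto
  then show ?thesis
    using i k assms(3)[of i] assms(3)[of k] by linarith
qed

definition M_max :: "(nat \<Rightarrow> real) \<Rightarrow> (nat \<Rightarrow> 'a \<Rightarrow> 'a) \<Rightarrow> nat
     \<Rightarrow> (('a::topological_space \<Rightarrow>\<^sub>C real) \<Rightarrow> real) \<Rightarrow> (('a \<Rightarrow>\<^sub>C real) \<Rightarrow> real)" where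
  "M_max q \<phi> n \<mu> = (\<lambda>f. MAX j\<in>{1..n}. q j + \<mu> (compC f (\<phi> j)))"

lemma M_fin_eq_M_max: "M_fin q \<phi> n = M_max (\<lambda>j. q j - alpha q n) \<phi> n"
  by (simp add: M_fin_def M_max_def fun_eq_iff)

lemma M_max_funpow_Suc:
  "(M_max q \<phi> n ^^ Suc k) m f = (MAX j\<in>{1..n}. q j + (M_max q \<phi> n ^^ k) m (compC f (\<phi> j)))"
  by (simp add: M_max_def)

lemma M_max_funpow_shift:
  assumes "n \<ge> 1"
  shows "(M_max (\<lambda>j. q j - c) \<phi> n ^^ k) m f = (M_max q \<phi> n ^^ k) m f - real k * c"
proof (induction k arbitrary: f)
  case 0
  then show ?case by simp
next
  case (Suc k)
  have "(M_max (\<lambda>j. q j - c) \<phi> n ^^ Suc k) m f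
      = (MAX j\<in>{1..n}. (q j + (M_max q \<phi> n ^^ k) m (compC f (\<phi> j))) + - (real (Suc k) * c))"
    by (simp only: M_max_funpow_Suc Suc) (simp add: algebra_simps)
  also have "\<dots> = (MAX j\<in>{1..n}. q j + (M_max q \<phi> n ^^ k) m (compC f (\<phi> j))) + - (real (Suc k) * c)"
    using assms by (intro Max_add_commute) auto
  also have "\<dots> = (M_max q \<phi> n ^^ Suc k) m f - real (Suc k) * c"
    unfolding M_max_funpow_Suc by simp
  finally show ?case .
qed

lemma M_max_funpow_mono:
  assumes "1 \<le> n" "n \<le> n'"
  shows "(M_max q \<phi> n ^^ k) m f \<le> (M_max q \<phi> n' ^^ k) m f"
proof (induction k arbitrary: f)
  case 0
  then show ?case by simp
next
  case (Suc k)
  have "q j + (M_max q \<phi> n ^^ k) m (compC f (\<phi> j)) \<le> (M_max q \<phi> n' ^^ Suc k) m f"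
    if "j \<in> {1..n}" for j
  proof -
    have "q j + (M_max q \<phi> n ^^ k) m (compC f (\<phi> j))
        \<le> q j + (M_max q \<phi> n' ^^ k) m (compC f (\<phi> j))"
      using Suc.IH by simp
    also have "\<dots> \<le> (M_max q \<phi> n' ^^ Suc k) m f"
      unfolding M_max_funpow_Suc using that assms by (intro Max_ge) auto
    finally show ?thesis .
  qed
  then have "(MAX j\<in>{1..n}. q j + (M_max q \<phi> n ^^ k) m (compC f (\<phi> j)))
      \<le> (M_max q \<phi> n' ^^ Suc k) m f"
    using assms(1) by (intro Max.boundedI) auto
  then show ?case
    by (simp only: M_max_funpow_Suc[where n = n])
qed

locale contracting_family =
  fixes \<phi> :: "nat \<Rightarrow> 'a::metric_space \<Rightarrow> 'a" and \<gamma> :: real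
  assumes contraction_factor_nonneg: "0 \<le> \<gamma>"
    and contracting: "\<And>j x y. j \<ge> 1 \<Longrightarrow> dist (\<phi> j x) (\<phi> j y) \<le> \<gamma> * dist x y"
begin

lemma apply_compC_phi: "j \<ge> 1 \<Longrightarrow> compC f (\<phi> j) x = f (\<phi> j x)"
  by (intro apply_compC lipschitz_on_continuous_on[of \<gamma>] lipschitz_onI contracting
      contraction_factor_nonneg)

lemma M_max_funpow_abs_diff_le:
  fixes g :: "'a \<Rightarrow>\<^sub>C real"
  assumes "idem_prob m" "idem_prob m'" "n \<ge> 1"
    and diam: "\<And>x y :: 'a. dist x y \<le> D"
    and osc: "\<And>x y. dist x y \<le> D * \<gamma> ^ k \<Longrightarrow> \<bar>g x - g y\<bar> \<le> e"
  shows "\<bar>(M_max c \<phi> n ^^ k) m g - (M_max c \<phi> n ^^ k) m' g\<bar> \<le> 2 * e"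
  using osc
proof (induction k arbitrary: g)
  case 0
  have "\<bar>g x - g undefined\<bar> \<le> e" for x
    using 0[of x undefined] diam[of x undefined] by simp
  then have "\<bar>m g - g undefined\<bar> \<le> e" "\<bar>m' g - g undefined\<bar> \<le> e"
    using assms(1,2) by (blast intro: idem_prob_abs_diff_le)+
  then show ?case by simp
next
  case (Suc k)
  have "\<bar>(M_max c \<phi> n ^^ k) m (compC g (\<phi> j)) - (M_max c \<phi> n ^^ k) m' (compC g (\<phi> j))\<bar>
      \<le> 2 * e" if j: "j \<in> {1..n}" for j
  proof (rule Suc.IH)
    fix x y :: 'a
    assume "dist x y \<le> D * \<gamma> ^ k"
    have "dist (\<phi> j x) (\<phi> j y) \<le> \<gamma> * dist x y"
      using contracting j by simp
    also have "\<dots> \<le> \<gamma> * (D * \<gamma> ^ k)"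
      using \<open>dist x y \<le> D * \<gamma> ^ k\<close> contraction_factor_nonneg by (rule mult_left_mono)
    also have "\<dots> = D * \<gamma> ^ Suc k"
      by simp
    finally show "\<bar>compC g (\<phi> j) x - compC g (\<phi> j) y\<bar> \<le> e"
      using Suc.prems j by (simp add: apply_compC_phi)
  qed
  then show ?case
    using assms(3) by (simp only: M_max_funpow_Suc) (rule abs_Max_diff_le; auto)
qed

lemma M_max_funpow_forgets_start:
  fixes f :: "'a \<Rightarrow>\<^sub>C real"
  assumes "compact (UNIV :: 'a set)" "\<gamma> < 1" "\<epsilon> > 0"
  obtains k where "\<And>c (n :: nat) m m'. n \<ge> 1 \<Longrightarrow> idem_prob m \<Longrightarrow> idem_prob m' \<Longrightarrow>
    \<bar>(M_max c \<phi> n ^^ k) m f - (M_max c \<phi> n ^^ k) m' f\<bar> \<le> \<epsilon>"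
proof -
  have "uniformly_continuous_on UNIV (apply_bcontfun f)"
    using assms(1) by (simp add: compact_uniformly_continuous)
  then obtain \<delta> where "\<delta> > 0" and \<delta>: "\<And>x y. dist x y < \<delta> \<Longrightarrow> dist (f x) (f y) < \<epsilon> / 2"
    unfolding uniformly_continuous_on_def using assms(3) by (metis UNIV_I half_gt_zero)
  obtain D where D: "\<And>x y :: 'a. dist x y \<le> D"
    using compact_imp_bounded[OF assms(1)] unfolding bounded_two_points by blast
  have "D \<ge> 0"
    using D[of undefined undefined] by simp
  obtain k where k: "\<gamma> ^ k < \<delta> / (D + 1)"
    using real_arch_pow_inv \<open>\<delta> > 0\<close> \<open>D \<ge> 0\<close> assms(2)
    by (metis add_nonneg_pos divide_pos_pos zero_less_one)
  have "D * \<gamma> ^ k \<le> (D + 1) * \<gamma> ^ k"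
    using contraction_factor_nonneg by (intro mult_right_mono) auto
  also have "\<dots> < \<delta>"
    using k \<open>D \<ge> 0\<close> by (simp add: field_simps)
  finally have osc: "\<bar>f x - f y\<bar> \<le> \<epsilon> / 2" if "dist x y \<le> D * \<gamma> ^ k" for x y
    using \<delta>[of x y] that by (simp add: dist_real_def)
  show ?thesis
  proof (rule that)
    fix c and m m' :: "('a \<Rightarrow>\<^sub>C real) \<Rightarrow> real" and n :: nat
    assume "n \<ge> 1" "idem_prob m" "idem_prob m'"
    have "\<bar>(M_max c \<phi> n ^^ k) m f - (M_max c \<phi> n ^^ k) m' f\<bar> \<le> 2 * (\<epsilon> / 2)"
      using \<open>idem_prob m\<close> \<open>idem_prob m'\<close> \<open>n \<ge> 1\<close> D osc by (rule M_max_funpow_abs_diff_le)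
    then show "\<bar>(M_max c \<phi> n ^^ k) m f - (M_max c \<phi> n ^^ k) m' f\<bar> \<le> \<epsilon>"
      by simp
  qed
qed

end

lemma alpha_tendsto_zero:
  fixes q :: "nat \<Rightarrow> real"
  assumes q_nonpos: "\<And>j. j \<ge> 1 \<Longrightarrow> q j \<le> 0" and q_sup: "(SUP j\<in>{1..}. q j) = 0"
  shows "alpha q \<longlonglongrightarrow> 0"
proof (rule LIMSEQ_I)
  fix \<epsilon> :: real
  assume "\<epsilon> > 0"
  have "bdd_above (q ` {1..})"
    using q_nonpos by (intro bdd_aboveI2) auto
  then obtain j where j: "j \<ge> 1" "- \<epsilon> < q j"
    using less_cSUP_iff[OF _ \<open>bdd_above (q ` {1..})\<close>, of "- \<epsilon>"] q_sup \<open>\<epsilon> > 0\<close> by force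
  have "norm (alpha q n - 0) < \<epsilon>" if "n \<ge> j" for n
  proof -
    have "alpha q n \<le> 0"
      unfolding alpha_def using j that q_nonpos by (subst Max_le_iff) auto
    moreover have "q j \<le> alpha q n"
      unfolding alpha_def using j that by (intro Max_ge) auto
    ultimately show ?thesis
      using j by simp
  qed
  then show "\<exists>N. \<forall>n\<ge>N. norm (alpha q n - 0) < \<epsilon>"
    by blast
qed

lemma tendsto_uniform_approx:
  fixes a :: "'a \<Rightarrow> 'b::metric_space"
  assumes approx: "\<And>\<epsilon>. \<epsilon> > 0 \<Longrightarrow> \<exists>k. \<forall>\<^sub>F x in F. dist (a x) (b k x) \<le> \<epsilon>"
    and lim: "\<And>k. (b k \<longlongrightarrow> L) F"
  shows "(a \<longlongrightarrow> L) F"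
proof (rule tendstoI)
  fix \<epsilon> :: real
  assume "\<epsilon> > 0"
  then obtain k where "\<forall>\<^sub>F x in F. dist (a x) (b k x) \<le> \<epsilon> / 2"
    using approx[of "\<epsilon> / 2"] by auto
  moreover have "\<forall>\<^sub>F x in F. dist (b k x) L < \<epsilon> / 2"
    using tendstoD[OF lim, of "\<epsilon> / 2"] \<open>\<epsilon> > 0\<close> by simp
  ultimately have "\<forall>\<^sub>F x in F. dist (a x) (b k x) + dist (b k x) L < \<epsilon>"
    by eventually_elim linarith
  then show "\<forall>\<^sub>F x in F. dist (a x) L < \<epsilon>"
    by (rule eventually_mono) (meson dist_triangle le_less_trans)
qed

locale M_inf_fixed_point = contracting_family \<phi> \<gamma>
  for \<phi> :: "nat \<Rightarrow> 'a::metric_space \<Rightarrow> 'a" and \<gamma> +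
  fixes q :: "nat \<Rightarrow> real" and \<nu> :: "('a \<Rightarrow>\<^sub>C real) \<Rightarrow> real"
  assumes weights_bdd: "bdd_above (q ` {1..})"
    and idem_prob_nu: "idem_prob \<nu>"
    and M_inf_fixed: "M_inf q \<phi> \<nu> = \<nu>"
begin

lemma bdd_above_M_inf_terms: "bdd_above ((\<lambda>j. q j + \<nu> (compC f (\<phi> j))) ` {1..})"
proof -
  obtain Q where Q: "\<And>j. j \<in> {1..} \<Longrightarrow> q j \<le> Q"
    using weights_bdd by (auto simp: bdd_above_def)
  have "\<nu> (compC f (\<phi> j)) \<le> norm f" if "j \<in> {1..}" for j
  proof -
    have "\<bar>compC f (\<phi> j) x - 0\<bar> \<le> norm f" for x
      using norm_bounded[of f "\<phi> j x"] that by (simp add: apply_compC_phi)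
    then have "\<bar>\<nu> (compC f (\<phi> j)) - 0\<bar> \<le> norm f"
      by (rule idem_prob_abs_diff_le[OF idem_prob_nu])
    then show ?thesis
      by simp
  qed
  then show ?thesis
    using Q by (intro bdd_aboveI2[where M = "Q + norm f"] add_mono)
qed

lemma fixed_point_eq_SUP: "\<nu> f = (SUP j\<in>{1..}. q j + \<nu> (compC f (\<phi> j)))"
  using fun_cong[OF M_inf_fixed, of f] by (simp add: M_inf_def)

lemma M_max_funpow_le:
  assumes "n \<ge> 1"
  shows "(M_max q \<phi> n ^^ k) \<nu> f \<le> \<nu> f"
proof (induction k arbitrary: f)
  case 0
  then show ?case by simp
next
  case (Suc k)
  have "q j + (M_max q \<phi> n ^^ k) \<nu> (compC f (\<phi> j)) \<le> \<nu> f" if "j \<in> {1..n}" for j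
  proof -
    have "q j + (M_max q \<phi> n ^^ k) \<nu> (compC f (\<phi> j)) \<le> q j + \<nu> (compC f (\<phi> j))"
      using Suc.IH by simp
    also have "\<dots> \<le> \<nu> f"
      unfolding fixed_point_eq_SUP[of f] using that
      by (intro cSUP_upper bdd_above_M_inf_terms) auto
    finally show ?thesis .
  qed
  then have "(MAX j\<in>{1..n}. q j + (M_max q \<phi> n ^^ k) \<nu> (compC f (\<phi> j))) \<le> \<nu> f"
    using assms by (intro Max.boundedI) auto
  then show ?case
    by (simp only: M_max_funpow_Suc)
qed

lemma M_max_funpow_approx:
  assumes "\<epsilon> > 0"
  shows "\<exists>N\<ge>1. \<nu> f - \<epsilon> < (M_max q \<phi> N ^^ k) \<nu> f"
  using assms
proof (induction k arbitrary: f \<epsilon>)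
  case 0
  then show ?case by auto
next
  case (Suc k)
  have "\<nu> f - \<epsilon> / 2 < (SUP j\<in>{1..}. q j + \<nu> (compC f (\<phi> j)))"
    using Suc.prems fixed_point_eq_SUP[of f] by simp
  then obtain j where j: "j \<ge> 1" "\<nu> f - \<epsilon> / 2 < q j + \<nu> (compC f (\<phi> j))"
    using less_cSUP_iff[OF _ bdd_above_M_inf_terms] by force
  obtain N where N: "N \<ge> 1" "\<nu> (compC f (\<phi> j)) - \<epsilon> / 2 < (M_max q \<phi> N ^^ k) \<nu> (compC f (\<phi> j))"
    using Suc.IH[of "\<epsilon> / 2"] Suc.prems by auto
  define N' where "N' = max N j"
  have "(M_max q \<phi> N ^^ k) \<nu> (compC f (\<phi> j)) \<le> (M_max q \<phi> N' ^^ k) \<nu> (compC f (\<phi> j))"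
    using N(1) by (intro M_max_funpow_mono) (auto simp: N'_def)
  also have "q j + \<dots> \<le> (M_max q \<phi> N' ^^ Suc k) \<nu> f"
    unfolding M_max_funpow_Suc using j(1) by (intro Max_ge) (auto simp: N'_def)
  finally show ?case
    using j N by (intro exI[of _ N']) (auto simp: N'_def)
qed

lemma M_max_funpow_tendsto: "(\<lambda>n. (M_max q \<phi> n ^^ k) \<nu> f) \<longlonglongrightarrow> \<nu> f"
proof (rule LIMSEQ_I)
  fix \<epsilon> :: real
  assume "\<epsilon> > 0"
  then obtain N where N: "N \<ge> 1" "\<nu> f - \<epsilon> < (M_max q \<phi> N ^^ k) \<nu> f"
    using M_max_funpow_approx by blast
  have "norm ((M_max q \<phi> n ^^ k) \<nu> f - \<nu> f) < \<epsilon>" if "n \<ge> N" for n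
    using N M_max_funpow_mono[OF N(1) that, of k q \<phi> \<nu> f] M_max_funpow_le[of n k f] that by auto
  then show "\<exists>N. \<forall>n\<ge>N. norm ((M_max q \<phi> n ^^ k) \<nu> f - \<nu> f) < \<epsilon>"
    by blast
qed

lemma M_fin_funpow_tendsto:
  assumes "alpha q \<longlonglongrightarrow> 0"
  shows "(\<lambda>n. (M_fin q \<phi> n ^^ k) \<nu> f) \<longlonglongrightarrow> \<nu> f"
proof -
  have "(\<lambda>n. (M_max q \<phi> n ^^ k) \<nu> f - real k * alpha q n) \<longlonglongrightarrow> \<nu> f - real k * 0"
    by (intro tendsto_intros M_max_funpow_tendsto assms)
  moreover have "\<forall>\<^sub>F n in sequentially.
      (M_max q \<phi> n ^^ k) \<nu> f - real k * alpha q n = (M_fin q \<phi> n ^^ k) \<nu> f"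
    using eventually_ge_at_top[of 1] by eventually_elim (simp add: M_fin_eq_M_max M_max_funpow_shift)
  ultimately show ?thesis
    by (simp add: tendsto_cong)
qed

lemma M_fin_fixed_points_tendsto:
  assumes "compact (UNIV :: 'a set)" "\<gamma> < 1" "alpha q \<longlonglongrightarrow> 0"
    and \<mu>: "\<And>n. n \<ge> 1 \<Longrightarrow> idem_prob (\<mu> n) \<and> M_fin q \<phi> n (\<mu> n) = \<mu> n"
  shows "(\<lambda>n. \<mu> n f) \<longlonglongrightarrow> \<nu> f"
proof (rule tendsto_uniform_approx)
  show "(\<lambda>n. (M_fin q \<phi> n ^^ k) \<nu> f) \<longlonglongrightarrow> \<nu> f" for k
    using assms(3) by (rule M_fin_funpow_tendsto)
next
  fix \<epsilon> :: real
  assume "\<epsilon> > 0"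
  then obtain k where k: "\<And>c n m m'. n \<ge> 1 \<Longrightarrow> idem_prob m \<Longrightarrow> idem_prob m' \<Longrightarrow>
      \<bar>(M_max c \<phi> n ^^ k) m f - (M_max c \<phi> n ^^ k) m' f\<bar> \<le> \<epsilon>"
    using M_max_funpow_forgets_start[OF assms(1,2)] by blast
  have "dist (\<mu> n f) ((M_fin q \<phi> n ^^ k) \<nu> f) \<le> \<epsilon>" if "n \<ge> 1" for n
  proof -
    have "(M_fin q \<phi> n ^^ k) (\<mu> n) = \<mu> n"
      using \<mu>[OF that] by (induction k) auto
    then show ?thesis
      using k[OF that _ idem_prob_nu] \<mu>[OF that] by (metis M_fin_eq_M_max dist_real_def)
  qed
  then have "\<forall>\<^sub>F n in sequentially. dist (\<mu> n f) ((M_fin q \<phi> n ^^ k) \<nu> f) \<le> \<epsilon>"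
    by (intro eventually_sequentiallyI[of 1])
  then show "\<exists>k. \<forall>\<^sub>F n in sequentially. dist (\<mu> n f) ((M_fin q \<phi> n ^^ k) \<nu> f) \<le> \<epsilon>"
    by blast
qed

end

theorem theorem3p4:
  fixes \<phi> :: "nat \<Rightarrow> 'a::metric_space \<Rightarrow> 'a"
    and q :: "nat \<Rightarrow> real" and \<gamma> :: real
    and \<nu> :: "('a \<Rightarrow>\<^sub>C real) \<Rightarrow> real"
    and \<mu> :: "nat \<Rightarrow> ('a \<Rightarrow>\<^sub>C real) \<Rightarrow> real"
    and r :: "nat \<Rightarrow> nat" and \<mu>\<^sub>0 :: "('a \<Rightarrow>\<^sub>C real) \<Rightarrow> real"
  assumes X_compact: "compact (UNIV :: 'a set)"
    and \<gamma>: "0 < \<gamma>" "\<gamma> < 1"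
    and contr: "\<And>j x1 x2. j \<ge> 1 \<Longrightarrow> dist (\<phi> j x1) (\<phi> j x2) \<le> \<gamma> * dist x1 x2"
    and q_nonpos: "\<And>j. j \<ge> 1 \<Longrightarrow> q j \<le> 0"
    and q_sup: "(SUP j\<in>{1..}. q j) = 0"
    and \<nu>: "idem_prob \<nu>" "M_inf q \<phi> \<nu> = \<nu>"
    and \<mu>: "\<And>n. n \<ge> 1 \<Longrightarrow> idem_prob (\<mu> n) \<and> M_fin q \<phi> n (\<mu> n) = \<mu> n"
    and r: "strict_mono r"
    and \<mu>\<^sub>0: "idem_prob \<mu>\<^sub>0"
    and conv: "\<And>f. (\<lambda>i. \<mu> (r i) f) \<longlonglongrightarrow> \<mu>\<^sub>0 f"
  shows "(\<forall>f. (\<lambda>i. \<mu> (r i) f) \<longlonglongrightarrow> \<nu> f) \<and> (\<forall>f. (\<lambda>n. \<mu> n f) \<longlonglongrightarrow> \<nu> f)"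
proof -
  have "bdd_above (q ` {1..})"
    using q_nonpos by (intro bdd_aboveI2) auto
  then interpret M_inf_fixed_point \<phi> \<gamma> q \<nu>
    using \<gamma>(1) contr \<nu> by unfold_locales auto
  have "(\<lambda>n. \<mu> n f) \<longlonglongrightarrow> \<nu> f" for f
    using X_compact \<gamma>(2) alpha_tendsto_zero[OF q_nonpos q_sup] \<mu>
    by (rule M_fin_fixed_points_tendsto)
  moreover have "(\<lambda>i. \<mu> (r i) f) \<longlonglongrightarrow> \<nu> f" if "(\<lambda>n. \<mu> n f) \<longlonglongrightarrow> \<nu> f" for f
    using LIMSEQ_subseq_LIMSEQ[OF that r] by (simp add: o_def)
  ultimately show ?thesis
    by blast
qed

end
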